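(* Let $A\in\mathbb{C}^{2n\times 2n}$ be a normal perskew-Hermitian matrix all of whose eigenvalues have nonzero real parts. Then there exist a unitary perplectic matrix $U\in\mathbb{C}^{2n\times 2n}$ and a diagonal matrix $D\in\mathbb{C}^{n\times n}$ such that $$A=U\begin{bmatrix} D & 0\\ 0 & -F_nD^HF_n\end{bmatrix}U^H .$$
   Context: For $m\ge1$, $F_m\in\mathbb{R}^{m\times m}$ denotes the flip (exchange) matrix with ones on the antidiagonal and zeros elsewhere. A matrix $A\in\mathbb{C}^{2n\times 2n}$ is per-Hermitian if $(F_{2n}A)^H=F_{2n}A$ and perskew-Hermitian if $(F_{2n}A)^H=-F_{2n}A$. A matrix $Z\in\mathbb{C}^{2n\times 2n}$ is perplectic if $Z^HF_{2n}Z=F_{2n}$; "unitary perplectic" means both unitary and perplectic. *)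

theory Defs
  imports "Jordan_Normal_Form.Schur_Decomposition" "Jordan_Normal_Form.Char_Poly"
begin

definition flip_mat :: "nat \<Rightarrow> complex mat" where
  "flip_mat m = mat m m (\<lambda>(i,j). if i + j + 1 = m then 1 else 0)"

definition perskew_hermitian :: "nat \<Rightarrow> complex mat \<Rightarrow> bool" where
  "perskew_hermitian n A \<longleftrightarrow>
     A \<in> carrier_mat (2*n) (2*n) \<and>
     mat_adjoint (flip_mat (2*n) * A) = - (flip_mat (2*n) * A)"

definition normal_mat :: "complex mat \<Rightarrow> bool" where
  "normal_mat A \<longleftrightarrow> A * mat_adjoint A = mat_adjoint A * A"

definition unitary_mat :: "nat \<Rightarrow> complex mat \<Rightarrow> bool" where
  "unitary_mat m U \<longleftrightarrow> U \<in> carrier_mat m m \<and>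
     U * mat_adjoint U = 1\<^sub>m m \<and> mat_adjoint U * U = 1\<^sub>m m"

definition perplectic :: "nat \<Rightarrow> complex mat \<Rightarrow> bool" where
  "perplectic n Z \<longleftrightarrow> Z \<in> carrier_mat (2*n) (2*n) \<and>
     mat_adjoint Z * flip_mat (2*n) * Z = flip_mat (2*n)"

end

theory Submission
  imports Defs "Jordan_Normal_Form.Spectral_Radius"
begin

text \<open>
  A Schur decomposition \<open>A = Q T Q\<^sup>H\<close> can be chosen with the eigenvalues of positive real part
  first, and normality makes \<open>T\<close> diagonal. Transporting the perskew symmetry gives
  \<open>M T = - T\<^sup>H M\<close> for the Hermitian unitary matrix \<open>M = Q\<^sup>H F\<^sub>2\<^sub>n Q\<close>, so
  \<open>M\<^sub>i\<^sub>j (t\<^sub>j + conj t\<^sub>i) = 0\<close>. As no \<open>t\<^sub>i\<close> is purely imaginary, \<open>M\<close> vanishes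
  on the two diagonal blocks; comparing row and column norms of the unitary \<open>M\<close> shows that both
  blocks have size \<open>n\<close>, so \<open>M = [0, B; B\<^sup>H, 0]\<close> with \<open>B\<close> unitary and
  \<open>B D\<^sub>2 = - D\<^sub>1\<^sup>H B\<close>. Finally \<open>U = Q \<cdot> diag(I, B\<^sup>H F\<^sub>n)\<close> is perplectic and
  brings \<open>A\<close> to the required form \<open>diag(D\<^sub>1, - F\<^sub>n D\<^sub>1\<^sup>H F\<^sub>n)\<close>.
\<close>

lemma mat_adjoint_alt:
  "mat_adjoint (A::complex mat) = mat (dim_col A) (dim_row A) (\<lambda>(i,j). cnj (A $$ (j,i)))"
  unfolding mat_adjoint_def by (rule eq_matI) (auto simp: mat_of_rows_def)

lemma dim_mat_adjoint [simp]:
  "dim_row (mat_adjoint (A::complex mat)) = dim_col A"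
  "dim_col (mat_adjoint (A::complex mat)) = dim_row A"
  by (auto simp: mat_adjoint_alt)

lemma mat_adjoint_carrier [simp]:
  "(A::complex mat) \<in> carrier_mat n m \<Longrightarrow> mat_adjoint A \<in> carrier_mat m n"
  by (auto simp: mat_adjoint_alt)

lemma index_mat_adjoint [simp]:
  "i < dim_col A \<Longrightarrow> j < dim_row A \<Longrightarrow> mat_adjoint (A::complex mat) $$ (i,j) = cnj (A $$ (j,i))"
  by (auto simp: mat_adjoint_alt)

lemma mat_adjoint_adjoint [simp]: "mat_adjoint (mat_adjoint (A::complex mat)) = A"
  by (rule eq_matI) auto

lemma mat_adjoint_mult:
  assumes "(A::complex mat) \<in> carrier_mat n m" "B \<in> carrier_mat m k"
  shows "mat_adjoint (A * B) = mat_adjoint B * mat_adjoint A"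
  using assms by (intro eq_matI) (auto simp: scalar_prod_def cnj_sum intro!: sum.cong)

lemma mat_adjoint_one [simp]: "mat_adjoint (1\<^sub>m n :: complex mat) = 1\<^sub>m n"
  by (rule eq_matI) auto

lemma mat_adjoint_zero [simp]: "mat_adjoint (0\<^sub>m n m :: complex mat) = 0\<^sub>m m n"
  by (rule eq_matI) auto

lemma mat_adjoint_four_block:
  assumes "(A::complex mat) \<in> carrier_mat n1 m1" "B \<in> carrier_mat n1 m2"
    "C \<in> carrier_mat n2 m1" "D \<in> carrier_mat n2 m2"
  shows "mat_adjoint (four_block_mat A B C D) =
    four_block_mat (mat_adjoint A) (mat_adjoint C) (mat_adjoint B) (mat_adjoint D)"
  using assms by (intro eq_matI) auto

lemma mult_mat_adjoint_diag:
  assumes "(X::complex mat) \<in> carrier_mat N M" "i < N"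
  shows "(X * mat_adjoint X) $$ (i,i) = of_real (\<Sum>j<M. (cmod (X $$ (i,j)))\<^sup>2)"
  using assms
  by (simp add: scalar_prod_def complex_norm_square of_real_sum lessThan_atLeast0 del: of_real_power)

lemma mat_adjoint_mult_diag:
  assumes "(X::complex mat) \<in> carrier_mat N M" "j < M"
  shows "(mat_adjoint X * X) $$ (j,j) = of_real (\<Sum>i<N. (cmod (X $$ (i,j)))\<^sup>2)"
proof -
  have "cnj z * z = of_real ((cmod z)\<^sup>2)" for z by (metis complex_norm_square mult.commute)
  then show ?thesis
    using assms by (simp add: scalar_prod_def of_real_sum lessThan_atLeast0 del: of_real_power)
qed

lemma mat_adjoint_mult_index:
  "i < dim_col W \<Longrightarrow> j < dim_col W \<Longrightarrow> (mat_adjoint W * (W::complex mat)) $$ (i,j) = col W j \<bullet>c col W i"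
  by (auto simp: scalar_prod_def intro!: sum.cong)

lemma mat_adjoint_conj:
  assumes "(U::complex mat) \<in> carrier_mat n n" "A \<in> carrier_mat n n"
  shows "mat_adjoint (mat_adjoint U * A * U) = mat_adjoint U * mat_adjoint A * U"
  using assms
  by (simp add: mat_adjoint_mult[of _ n n _ n] assoc_mult_mat[of _ n n _ n _ n] mult_carrier_mat[of _ n n _ n])

lemma mult_conj_mat_adjoint:
  assumes "(U::complex mat) \<in> carrier_mat n n" "V \<in> carrier_mat n n" "T \<in> carrier_mat n n"
  shows "U * (V * T * mat_adjoint V) * mat_adjoint U = (U * V) * T * mat_adjoint (U * V)"
  using assms
  by (simp add: mat_adjoint_mult[of U n n V n] assoc_mult_mat[of _ n n _ n _ n]
      mult_carrier_mat[of _ n n _ n])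

lemma unitary_mat_carrier: "unitary_mat n U \<Longrightarrow> U \<in> carrier_mat n n"
  by (simp add: unitary_mat_def)

lemma unitary_mat_adjoint: "unitary_mat n U \<Longrightarrow> unitary_mat n (mat_adjoint U)"
  by (auto simp: unitary_mat_def)

lemma unitary_mat_cancel:
  assumes U: "unitary_mat n U" and X: "X \<in> carrier_mat n m"
  shows "U * (mat_adjoint U * X) = X" "mat_adjoint U * (U * X) = X"
proof -
  have Uc: "U \<in> carrier_mat n n" using U by (rule unitary_mat_carrier)
  have "U * (mat_adjoint U * X) = (U * mat_adjoint U) * X"
    using Uc X by (simp add: assoc_mult_mat[of U n n _ n X m])
  then show "U * (mat_adjoint U * X) = X" using U X by (simp add: unitary_mat_def)
  have "mat_adjoint U * (U * X) = (mat_adjoint U * U) * X"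
    using Uc X by (simp add: assoc_mult_mat[of _ n n U n X m])
  then show "mat_adjoint U * (U * X) = X" using U X by (simp add: unitary_mat_def)
qed

lemma unitary_mat_mult:
  assumes U: "unitary_mat n U" and V: "unitary_mat n V"
  shows "unitary_mat n (U * V)"
proof -
  have Uc: "U \<in> carrier_mat n n" and Vc: "V \<in> carrier_mat n n"
    using U V by (auto simp: unitary_mat_carrier)
  note [simp] = assoc_mult_mat[of _ n n _ n _ n] mult_carrier_mat[of _ n n _ n]
    unitary_mat_cancel[OF U, of _ n] unitary_mat_cancel[OF V, of _ n]
  have "U * V * mat_adjoint (U * V) = 1\<^sub>m n" "mat_adjoint (U * V) * (U * V) = 1\<^sub>m n"
    using U V Uc Vc by (simp_all add: mat_adjoint_mult[OF Uc Vc] unitary_mat_def)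
  then show ?thesis using Uc Vc unfolding unitary_mat_def by auto
qed

lemma unitary_mat_four_block_diag:
  assumes X: "unitary_mat m X" and Y: "unitary_mat k Y"
  shows "unitary_mat (m + k) (four_block_mat X (0\<^sub>m m k) (0\<^sub>m k m) Y)"
proof -
  have Xc: "X \<in> carrier_mat m m" and Yc: "Y \<in> carrier_mat k k"
    using X Y by (auto simp: unitary_mat_carrier)
  have z: "(0\<^sub>m m k :: complex mat) \<in> carrier_mat m k" "(0\<^sub>m k m :: complex mat) \<in> carrier_mat k m"
    by auto
  have adj: "mat_adjoint (four_block_mat X (0\<^sub>m m k) (0\<^sub>m k m) Y) =
      four_block_mat (mat_adjoint X) (0\<^sub>m m k) (0\<^sub>m k m) (mat_adjoint Y)"
    using mat_adjoint_four_block[OF Xc z Yc] by simp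
  show ?thesis
    unfolding unitary_mat_def adj
      mult_four_block_mat[OF Xc z Yc mat_adjoint_carrier[OF Xc] z mat_adjoint_carrier[OF Yc]]
      mult_four_block_mat[OF mat_adjoint_carrier[OF Xc] z mat_adjoint_carrier[OF Yc] Xc z Yc]
    using X Y Xc Yc by (auto simp: unitary_mat_def)
qed

lemma unitary_similar_mat_wit:
  assumes U: "unitary_mat n U" and A: "A \<in> carrier_mat n n"
  shows "similar_mat_wit A (mat_adjoint U * A * U) U (mat_adjoint U)"
proof (rule similar_mat_witI[of _ _ n])
  have Uc: "U \<in> carrier_mat n n" using U by (rule unitary_mat_carrier)
  show "A = U * (mat_adjoint U * A * U) * mat_adjoint U"
    using U Uc A
    by (simp add: unitary_mat_cancel[OF U, of _ n] assoc_mult_mat[of _ n n _ n _ n]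
        mult_carrier_mat[of _ n n _ n] unitary_mat_def)
qed (use U A in \<open>auto simp: unitary_mat_def\<close>)

lemma unitary_similar_mat_witD:
  assumes U: "unitary_mat n U" and sim: "similar_mat_wit A T U (mat_adjoint U)"
  shows "A = U * T * mat_adjoint U" "T = mat_adjoint U * A * U"
    "A \<in> carrier_mat n n" "T \<in> carrier_mat n n"
proof -
  have "dim_row A = n"
    using similar_mat_witD(6)[OF refl sim] unitary_mat_carrier[OF U] by auto
  note AT = similar_mat_witD[OF this[symmetric] sim]
  show "A = U * T * mat_adjoint U" "A \<in> carrier_mat n n" and T: "T \<in> carrier_mat n n"
    by (fact AT(3,4,5))+
  then have "dim_row T = n" by auto
  from similar_mat_witD(3)[OF this[symmetric] similar_mat_wit_sym[OF sim]]
  show "T = mat_adjoint U * A * U" .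
qed

section \<open>Orthonormal completion and unitary Schur form\<close>

definition vec_normalize :: "complex vec \<Rightarrow> complex vec" where
  "vec_normalize w = complex_of_real (1 / sqrt (Re (w \<bullet>c w))) \<cdot>\<^sub>v w"

lemma vec_normalize_carrier [simp]: "w \<in> carrier_vec n \<Longrightarrow> vec_normalize w \<in> carrier_vec n"
  by (simp add: vec_normalize_def)

lemma cscalar_prod_smult:
  fixes v w :: "complex vec"
  assumes "v \<in> carrier_vec n" "w \<in> carrier_vec n"
  shows "(a \<cdot>\<^sub>v v) \<bullet>c (b \<cdot>\<^sub>v w) = a * cnj b * (v \<bullet>c w)"
  using assms by (simp add: conjugate_smult_vec)

lemma vec_normalize_unit:
  assumes w: "w \<in> carrier_vec n" "w \<noteq> 0\<^sub>v n"
  shows "vec_normalize w \<bullet>c vec_normalize w = 1"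
proof -
  define c where "c = Re (w \<bullet>c w)"
  have "w \<bullet>c w > 0" using w by simp
  then have ww: "w \<bullet>c w = complex_of_real c" and c: "c > 0"
    unfolding c_def by (auto simp: less_complex_def complex_eq_iff)
  have "vec_normalize w \<bullet>c vec_normalize w =
      complex_of_real (1 / sqrt c) * cnj (complex_of_real (1 / sqrt c)) * (w \<bullet>c w)"
    unfolding vec_normalize_def c_def by (rule cscalar_prod_smult[OF w(1) w(1)])
  also have "\<dots> = complex_of_real (1 / sqrt c * (1 / sqrt c) * c)"
    unfolding ww by (simp only: complex_cnj_complex_of_real of_real_mult)
  also have "1 / sqrt c * (1 / sqrt c) * c = 1"
    using c by (simp add: field_simps flip: power2_eq_square)
  finally show ?thesis by simp
qed

lemma vec_normalize_orthogonal:
  assumes "v \<in> carrier_vec n" "w \<in> carrier_vec n" "v \<bullet>c w = 0"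
  shows "vec_normalize v \<bullet>c vec_normalize w = 0"
  unfolding vec_normalize_def by (simp add: cscalar_prod_smult[OF assms(1,2)] assms(3))

lemma vec_normalize_unit_id: "w \<bullet>c w = 1 \<Longrightarrow> vec_normalize w = w"
  unfolding vec_normalize_def by simp

lemma unitary_mat_of_cols:
  assumes us: "length us = n" "set us \<subseteq> carrier_vec n"
    and orthonormal: "\<And>i j. i < n \<Longrightarrow> j < n \<Longrightarrow> us ! j \<bullet>c us ! i = (if i = j then 1 else 0)"
  shows "unitary_mat n (mat_of_cols n us)"
proof -
  define W where "W = mat_of_cols n us"
  have W: "W \<in> carrier_mat n n" unfolding W_def using mat_of_cols_carrier(1)[of n us] us(1) by simp
  have col_W: "col W i = us ! i" if "i < n" for i
    unfolding W_def using us that by (intro col_mat_of_cols) auto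
  have WW: "mat_adjoint W * W = 1\<^sub>m n"
  proof (rule eq_matI)
    fix i j assume "i < dim_row (1\<^sub>m n)" "j < dim_col (1\<^sub>m n)"
    then show "(mat_adjoint W * W) $$ (i, j) = 1\<^sub>m n $$ (i, j)"
      using W by (subst mat_adjoint_mult_index) (auto simp: col_W orthonormal)
  qed (use W in auto)
  moreover have "W * mat_adjoint W = 1\<^sub>m n"
    using mat_mult_left_right_inverse[OF mat_adjoint_carrier[OF W] W WW] .
  ultimately show ?thesis using W unfolding unitary_mat_def W_def by blast
qed

lemma unitary_mat_with_first_col:
  assumes v: "v \<in> carrier_vec n" and v1: "v \<bullet>c v = 1"
  shows "\<exists>W. unitary_mat n W \<and> col W 0 = v"
proof -
  have v0: "v \<noteq> 0\<^sub>v n" using v1 by auto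
  then have n: "n > 0" using v by (cases n) auto
  interpret cof_vec_space n "TYPE(complex)" .
  define b where "b = basis_completion v"
  from basis_completion[OF v v0, folded b_def]
  have b: "distinct b" "\<not> lin_dep (set b)" "set b \<subseteq> carrier_vec n" "hd b = v" "length b = n"
    by auto
  then obtain vs where bv: "b = v # vs" using n by (cases b) auto
  define ws where "ws = gram_schmidt n b"
  from gram_schmidt_result[OF b(3,1,2) refl, folded ws_def]
  have ws: "set ws \<subseteq> carrier_vec n" "corthogonal ws" "length ws = n"
    by (auto simp: b(5))
  have hd_ws: "hd ws = v" using gram_schmidt_hd[OF v, of vs] unfolding ws_def bv .
  have ws_carrier: "ws ! i \<in> carrier_vec n" if "i < n" for i using ws that by auto
  have ws_nonzero: "ws ! i \<noteq> 0\<^sub>v n" if "i < n" for i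
  proof
    assume "ws ! i = 0\<^sub>v n"
    then have "ws ! i \<bullet>c ws ! i = 0" by simp
    with corthogonalD[OF ws(2), of i i] that ws(3) show False by auto
  qed
  define us where "us = map vec_normalize ws"
  have orthonormal: "us ! j \<bullet>c us ! i = (if i = j then 1 else 0)" if "i < n" "j < n" for i j
  proof (cases "i = j")
    case True
    then show ?thesis using vec_normalize_unit[OF ws_carrier ws_nonzero] that ws(3)
      by (simp add: us_def)
  next
    case False
    then have "ws ! j \<bullet>c ws ! i = 0" using corthogonalD[OF ws(2), of j i] that ws(3) by auto
    then show ?thesis
      using vec_normalize_orthogonal[OF ws_carrier ws_carrier] that ws(3) False by (simp add: us_def)
  qed
  have us: "length us = n" "set us \<subseteq> carrier_vec n" using ws by (auto simp: us_def)
  have "us ! 0 = v"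
    using hd_ws n ws(3) vec_normalize_unit_id[OF v1] by (cases ws) (auto simp: us_def)
  then have "col (mat_of_cols n us) 0 = v" using us n by (subst col_mat_of_cols) auto
  then show ?thesis using unitary_mat_of_cols[OF us orthonormal] by blast
qed

lemma unit_eigenvector:
  assumes A: "(A::complex mat) \<in> carrier_mat n n" and e: "eigenvalue A e"
  shows "\<exists>v. v \<in> carrier_vec n \<and> v \<bullet>c v = 1 \<and> A *\<^sub>v v = e \<cdot>\<^sub>v v"
proof -
  obtain v where "eigenvector A v e" using e unfolding eigenvalue_def by auto
  then have v: "v \<in> carrier_vec n" "v \<noteq> 0\<^sub>v n" "A *\<^sub>v v = e \<cdot>\<^sub>v v"
    using A by (auto simp: eigenvector_def)
  then have "A *\<^sub>v vec_normalize v = e \<cdot>\<^sub>v vec_normalize v"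
    unfolding vec_normalize_def using A by (simp add: mult_mat_vec smult_smult_assoc mult.commute)
  then show ?thesis using vec_normalize_unit[OF v(1,2)] v(1) by (intro exI[of _ "vec_normalize v"]) auto
qed

lemma unitary_eigen_first_col:
  assumes A: "A \<in> carrier_mat n n" and W: "unitary_mat n W"
    and Av: "A *\<^sub>v col W 0 = e \<cdot>\<^sub>v col W 0" and i: "i < n"
  shows "(mat_adjoint W * A * W) $$ (i,0) = (if i = 0 then e else 0)"
proof -
  have Wc: "W \<in> carrier_mat n n" using W by (rule unitary_mat_carrier)
  have "(mat_adjoint W * A * W) $$ (i,0) = (mat_adjoint W * (A * W)) $$ (i,0)"
    by (simp only: assoc_mult_mat[OF mat_adjoint_carrier[OF Wc] A Wc])
  also have "\<dots> = row (mat_adjoint W) i \<bullet> col (A * W) 0"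
    using i Wc A by (subst index_mult_mat(1)) auto
  also have "col (A * W) 0 = A *\<^sub>v col W 0"
    using i by (intro col_mult2[OF A Wc]) simp
  also have "\<dots> = e \<cdot>\<^sub>v col W 0" by (rule Av)
  also have "row (mat_adjoint W) i \<bullet> (e \<cdot>\<^sub>v col W 0) = e * (mat_adjoint W * W) $$ (i,0)"
    using Wc i by (simp add: scalar_prod_smult_distrib[of _ n])
  finally show ?thesis using W i by (simp add: unitary_mat_def)
qed

lemma unitary_deflation:
  assumes A: "A \<in> carrier_mat (Suc m) (Suc m)" and e: "eigenvalue A e"
  shows "\<exists>W B C. unitary_mat (Suc m) W \<and> B \<in> carrier_mat 1 m \<and> C \<in> carrier_mat m m \<and>
    similar_mat_wit A (four_block_mat (mat 1 1 (\<lambda>_. e)) B (0\<^sub>m m 1) C) W (mat_adjoint W)"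
proof -
  obtain v where v: "v \<in> carrier_vec (Suc m)" "v \<bullet>c v = 1" "A *\<^sub>v v = e \<cdot>\<^sub>v v"
    using unit_eigenvector[OF A e] by blast
  obtain W where W: "unitary_mat (Suc m) W" and Wv: "col W 0 = v"
    using unitary_mat_with_first_col[OF v(1,2)] by blast
  define A' where "A' = mat_adjoint W * A * W"
  have A': "A' \<in> carrier_mat (1 + m) (1 + m)"
    using A unitary_mat_carrier[OF W] unfolding A'_def by auto
  have first_col: "A' $$ (i,0) = (if i = 0 then e else 0)" if "i < Suc m" for i
    unfolding A'_def using unitary_eigen_first_col[OF A W] v(3) Wv that by simp
  obtain A11 B A21 C where sb: "split_block A' 1 1 = (A11, B, A21, C)"
    by (cases "split_block A' 1 1") auto
  from split_block[OF sb, of m m] A' have blocks: "A11 \<in> carrier_mat 1 1" "B \<in> carrier_mat 1 m"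
    "A21 \<in> carrier_mat m 1" "C \<in> carrier_mat m m" "A' = four_block_mat A11 B A21 C"
    by auto
  have "A11 = mat 1 1 (\<lambda>_. e)" "A21 = 0\<^sub>m m 1"
    using sb A' first_col unfolding split_block_def Let_def by (auto intro!: eq_matI)
  then have "mat_adjoint W * A * W = four_block_mat (mat 1 1 (\<lambda>_. e)) B (0\<^sub>m m 1) C"
    using blocks(5) unfolding A'_def by simp
  then show ?thesis using unitary_similar_mat_wit[OF W A] W blocks(2,4) by auto
qed

lemma unitary_similar_mat_wit_trans:
  assumes U: "unitary_mat n U" and V: "unitary_mat n V"
    and "similar_mat_wit A B U (mat_adjoint U)" "similar_mat_wit B C V (mat_adjoint V)"
  shows "similar_mat_wit A C (U * V) (mat_adjoint (U * V))"
  using similar_mat_wit_trans[OF assms(3,4)]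
  by (simp add: mat_adjoint_mult[OF unitary_mat_carrier[OF U] unitary_mat_carrier[OF V]])

lemma similar_mat_wit_unitary_block:
  assumes V: "unitary_mat m V" and sim: "similar_mat_wit C T V (mat_adjoint V)"
    and E: "E \<in> carrier_mat k k" and B: "B \<in> carrier_mat k m"
  shows "similar_mat_wit (four_block_mat E B (0\<^sub>m m k) C) (four_block_mat E (B * V) (0\<^sub>m m k) T)
    (four_block_mat (1\<^sub>m k) (0\<^sub>m k m) (0\<^sub>m m k) V)
    (mat_adjoint (four_block_mat (1\<^sub>m k) (0\<^sub>m k m) (0\<^sub>m m k) V))"
proof -
  have Vc: "V \<in> carrier_mat m m" using V by (rule unitary_mat_carrier)
  have C: "C \<in> carrier_mat m m" using unitary_similar_mat_witD[OF V sim] by blast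
  have "B = 1\<^sub>m k * (B * V) * mat_adjoint V"
    using B Vc V by (simp add: assoc_mult_mat[of B k m V m _ m] unitary_mat_def)
  moreover have "0\<^sub>m m k = V * 0\<^sub>m m k * 1\<^sub>m k" using Vc by simp
  ultimately have "similar_mat_wit (four_block_mat E B (0\<^sub>m m k) C) (four_block_mat E (B * V) (0\<^sub>m m k) T)
    (four_block_mat (1\<^sub>m k) (0\<^sub>m k m) (0\<^sub>m m k) V)
    (four_block_mat (1\<^sub>m k) (0\<^sub>m k m) (0\<^sub>m m k) (mat_adjoint V))"
    using B Vc by (intro similar_mat_wit_four_block[OF similar_mat_wit_refl[OF E] sim _ _ E C]) auto
  moreover have "mat_adjoint (four_block_mat (1\<^sub>m k) (0\<^sub>m k m) (0\<^sub>m m k) V) =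
      four_block_mat (1\<^sub>m k) (0\<^sub>m k m) (0\<^sub>m m k) (mat_adjoint V)"
    using mat_adjoint_four_block[of "1\<^sub>m k" k k "0\<^sub>m k m" m "0\<^sub>m m k" m V] Vc by simp
  ultimately show ?thesis by simp
qed

lemma similar_upper_triangular_diag_eigenvalue:
  fixes A :: "'a :: field mat"
  assumes sim: "similar_mat_wit A T P Q" and T: "T \<in> carrier_mat n n"
    and ut: "upper_triangular T" and i: "i < n"
  shows "eigenvalue A (T $$ (i,i))"
proof -
  have A: "A \<in> carrier_mat n n"
    using similar_mat_witD2[OF T similar_mat_wit_sym[OF sim]] by auto
  have "similar_mat A T" using sim unfolding similar_mat_def by blast
  from char_poly_similar[OF this]
  have "char_poly A = (\<Prod>a \<leftarrow> diag_mat T. [:- a, 1:])"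
    using char_poly_upper_triangular[OF T ut] by simp
  moreover have "T $$ (i,i) \<in> set (diag_mat T)" using T i by (auto simp: diag_mat_def)
  ultimately have "poly (char_poly A) (T $$ (i,i)) = 0"
    by (simp add: poly_prod_list o_def prod_list_zero_iff)
  then show ?thesis using eigenvalue_root_char_poly[OF A] by simp
qed

lemma unitary_schur_step:
  assumes W: "unitary_mat (Suc m) W" and B: "B \<in> carrier_mat 1 m"
    and simW: "similar_mat_wit A (four_block_mat (mat 1 1 (\<lambda>_. e)) B (0\<^sub>m m 1) C) W (mat_adjoint W)"
    and V: "unitary_mat m V" and simV: "similar_mat_wit C T' V (mat_adjoint V)"
    and ut': "upper_triangular T'"
  shows "\<exists>U T. unitary_mat (Suc m) U \<and> similar_mat_wit A T U (mat_adjoint U) \<and> upper_triangular T \<and>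
    T $$ (0,0) = e \<and> (\<forall>i<m. T $$ (Suc i, Suc i) = T' $$ (i,i))"
proof -
  have T': "T' \<in> carrier_mat m m" using unitary_similar_mat_witD[OF V simV] by blast
  define E where "E = (mat 1 1 (\<lambda>_. e) :: complex mat)"
  define T where "T = four_block_mat E (B * V) (0\<^sub>m m 1) T'"
  define V' where "V' = four_block_mat (1\<^sub>m 1) (0\<^sub>m 1 m) (0\<^sub>m m 1) V"
  have E: "E \<in> carrier_mat 1 1" unfolding E_def by simp
  have V': "unitary_mat (Suc m) V'"
    using unitary_mat_four_block_diag[OF _ V, of 1] unfolding V'_def by (simp add: unitary_mat_def)
  have "similar_mat_wit (four_block_mat E B (0\<^sub>m m 1) C) T V' (mat_adjoint V')"
    unfolding T_def V'_def by (rule similar_mat_wit_unitary_block[OF V simV E B])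
  then have "similar_mat_wit A T (W * V') (mat_adjoint (W * V'))"
    using unitary_similar_mat_wit_trans[OF W V' simW] unfolding E_def by blast
  moreover have "upper_triangular T"
    unfolding T_def
    by (rule upper_triangular_four_block[OF E T' _ ut']) (auto simp: E_def upper_triangular_def)
  moreover have "T $$ (0,0) = e" "\<forall>i<m. T $$ (Suc i, Suc i) = T' $$ (i, i)"
    using E T' unfolding T_def by (auto simp: E_def)
  ultimately show ?thesis using unitary_mat_mult[OF W V'] by blast
qed

text \<open>
  In each deflation step an eigenvalue satisfying \<open>P\<close> is chosen whenever there is one, so
  these eigenvalues come first on the diagonal.
\<close>
lemma unitary_schur_ordered:
  fixes P :: "complex \<Rightarrow> bool"
  assumes "(A::complex mat) \<in> carrier_mat n n"
  shows "\<exists>U T k. unitary_mat n U \<and> similar_mat_wit A T U (mat_adjoint U) \<and> upper_triangular T \<and>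
    k \<le> n \<and> (\<forall>i<k. P (T $$ (i,i))) \<and> (\<forall>i. k \<le> i \<and> i < n \<longrightarrow> \<not> P (T $$ (i,i)))"
  using assms
proof (induction n arbitrary: A)
  case 0
  then have "A = 1\<^sub>m 0" by (auto intro!: eq_matI)
  moreover have "unitary_mat 0 (1\<^sub>m 0)" "upper_triangular (1\<^sub>m 0 :: complex mat)"
    "similar_mat_wit (1\<^sub>m 0) (1\<^sub>m 0) (1\<^sub>m 0) (mat_adjoint (1\<^sub>m 0 :: complex mat))"
    using similar_mat_wit_refl[of "1\<^sub>m 0 :: complex mat" 0]
    by (auto simp: unitary_mat_def upper_triangular_def)
  ultimately show ?case by (intro exI[of _ "1\<^sub>m 0"] exI[of _ "0::nat"]) auto
next
  case (Suc m A)
  obtain e where e: "eigenvalue A e" and preferred: "(\<exists>\<mu>. eigenvalue A \<mu> \<and> P \<mu>) \<Longrightarrow> P e"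
    using spectrum_non_empty[OF Suc.prems] unfolding spectrum_def by blast
  obtain W B C where W: "unitary_mat (Suc m) W" and B: "B \<in> carrier_mat 1 m"
    and C: "C \<in> carrier_mat m m"
    and simW: "similar_mat_wit A (four_block_mat (mat 1 1 (\<lambda>_. e)) B (0\<^sub>m m 1) C) W (mat_adjoint W)"
    using unitary_deflation[OF Suc.prems e] by blast
  obtain V T' k' where V: "unitary_mat m V" and simV: "similar_mat_wit C T' V (mat_adjoint V)"
    and ut': "upper_triangular T'" and k': "k' \<le> m"
    and before: "\<forall>i<k'. P (T' $$ (i,i))" and after: "\<forall>i. k' \<le> i \<and> i < m \<longrightarrow> \<not> P (T' $$ (i,i))"
    using Suc.IH[OF C] by blast
  obtain U T where U: "unitary_mat (Suc m) U" and sim: "similar_mat_wit A T U (mat_adjoint U)"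
    and ut: "upper_triangular T" and T0: "T $$ (0,0) = e"
    and Ti: "\<forall>i<m. T $$ (Suc i, Suc i) = T' $$ (i,i)"
    using unitary_schur_step[OF W B simW V simV ut'] by blast
  have T: "T \<in> carrier_mat (Suc m) (Suc m)" using unitary_similar_mat_witD[OF U sim] by blast
  show ?case
  proof (cases "P e")
    case True
    have "\<forall>i<Suc k'. P (T $$ (i,i))"
      using True before T0 Ti k' by (auto simp: less_Suc_eq_0_disj)
    moreover have "\<forall>i. Suc k' \<le> i \<and> i < Suc m \<longrightarrow> \<not> P (T $$ (i,i))"
    proof (intro allI impI)
      fix i assume "Suc k' \<le> i \<and> i < Suc m"
      then obtain j where "i = Suc j" "k' \<le> j" "j < m" by (cases i) auto
      then show "\<not> P (T $$ (i,i))" using after Ti by auto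
    qed
    ultimately show ?thesis using U sim ut k' by blast
  next
    case False
    then have "\<forall>i. 0 \<le> i \<and> i < Suc m \<longrightarrow> \<not> P (T $$ (i,i))"
      using preferred similar_upper_triangular_diag_eigenvalue[OF sim T ut] by blast
    then show ?thesis using U sim ut by blast
  qed
qed

section \<open>Normal matrices\<close>

lemma normal_mat_unitary_similar:
  assumes U: "unitary_mat n U" and sim: "similar_mat_wit A T U (mat_adjoint U)"
    and N: "normal_mat A"
  shows "normal_mat T"
proof -
  note A = unitary_similar_mat_witD[OF U sim]
  have Uc: "U \<in> carrier_mat n n" using U by (rule unitary_mat_carrier)
  have adj_T: "mat_adjoint T = mat_adjoint U * mat_adjoint A * U"
    unfolding A(2) by (rule mat_adjoint_conj[OF Uc A(3)])
  note [simp] = assoc_mult_mat[of _ n n _ n _ n] mult_carrier_mat[of _ n n _ n]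
    unitary_mat_cancel[OF U, of _ n]
  have "A * (mat_adjoint A * U) = (A * mat_adjoint A) * U" using A(3) Uc by simp
  also have "\<dots> = (mat_adjoint A * A) * U" using N unfolding normal_mat_def by simp
  also have "\<dots> = mat_adjoint A * (A * U)" using A(3) Uc by simp
  finally have AAU: "A * (mat_adjoint A * U) = mat_adjoint A * (A * U)" .
  have "T * mat_adjoint T = mat_adjoint U * (A * (mat_adjoint A * U))"
    unfolding adj_T unfolding A(2) using A(3) Uc by simp
  moreover have "mat_adjoint T * T = mat_adjoint U * (mat_adjoint A * (A * U))"
    unfolding adj_T unfolding A(2) using A(3) Uc by simp
  ultimately show ?thesis using AAU unfolding normal_mat_def by simp
qed

lemma normal_upper_triangular_diagonal:
  assumes T: "(T::complex mat) \<in> carrier_mat n n" and ut: "upper_triangular T"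
    and N: "normal_mat T"
  shows "diagonal_mat T"
proof -
  have lower: "T $$ (i,j) = 0" if "j < i" "i < n" for i j
    using ut T that by (auto simp: upper_triangular_def)
  have norms: "(\<Sum>k<n. (cmod (T $$ (i,k)))\<^sup>2) = (\<Sum>k<n. (cmod (T $$ (k,i)))\<^sup>2)" if "i < n" for i
    using N mult_mat_adjoint_diag[OF T that] mat_adjoint_mult_diag[OF T that]
    unfolding normal_mat_def by (metis of_real_eq_iff)
  text \<open>Row \<open>i\<close> and column \<open>i\<close> have equal norms, and by induction column \<open>i\<close> has no
    off-diagonal entries; hence neither has row \<open>i\<close>.\<close>
  have upper: "T $$ (i,j) = 0" if "i < j" "j < n" for i j
    using that
  proof (induction i arbitrary: j rule: less_induct)
    case (less i)
    have fin: "finite {..<n}" by simp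
    have col: "T $$ (k,i) = 0" if "k < n" "k \<noteq> i" for k
    proof (cases "k < i")
      case True
      then show ?thesis using less.IH[of k i] less.prems by simp
    next
      case False
      then have "i < k" using that(2) by simp
      then show ?thesis using that(1) by (rule lower)
    qed
    have "(\<Sum>k<n. (cmod (T $$ (k,i)))\<^sup>2) = (cmod (T $$ (i,i)))\<^sup>2"
      using less.prems col by (subst sum.remove[OF fin, of i]) (auto intro!: sum.neutral)
    moreover have "(\<Sum>k<n. (cmod (T $$ (i,k)))\<^sup>2) =
        (cmod (T $$ (i,i)))\<^sup>2 + (\<Sum>k\<in>{..<n} - {i}. (cmod (T $$ (i,k)))\<^sup>2)"
      using less.prems by (subst sum.remove[OF fin, of i]) auto
    ultimately have "(\<Sum>k\<in>{..<n} - {i}. (cmod (T $$ (i,k)))\<^sup>2) = 0"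
      using norms[of i] less.prems by simp
    then have "\<forall>k\<in>{..<n} - {i}. (cmod (T $$ (i,k)))\<^sup>2 = 0"
      by (subst (asm) sum_nonneg_eq_0_iff) auto
    then show ?case using less.prems by auto
  qed
  show ?thesis
    unfolding diagonal_mat_def using T lower upper by (metis carrier_matD linorder_neqE_nat)
qed

lemma normal_ordered_diagonalization:
  assumes A: "A \<in> carrier_mat N N" and N: "normal_mat A"
    and ev: "\<And>ev. eigenvalue A ev \<Longrightarrow> Re ev \<noteq> 0"
  obtains Q T k where "unitary_mat N Q" "similar_mat_wit A T Q (mat_adjoint Q)"
    "T \<in> carrier_mat N N" "diagonal_mat T" "k \<le> N"
    "\<And>i. i < k \<Longrightarrow> Re (T $$ (i,i)) > 0" "\<And>i. k \<le> i \<Longrightarrow> i < N \<Longrightarrow> Re (T $$ (i,i)) < 0"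
proof -
  obtain Q T k where Q: "unitary_mat N Q" and sim: "similar_mat_wit A T Q (mat_adjoint Q)"
    and ut: "upper_triangular T" and k: "k \<le> N" and pos: "\<forall>i<k. Re (T $$ (i,i)) > 0"
    and nonpos: "\<forall>i. k \<le> i \<and> i < N \<longrightarrow> \<not> Re (T $$ (i,i)) > 0"
    using unitary_schur_ordered[OF A, of "\<lambda>z. Re z > 0"] by blast
  have T: "T \<in> carrier_mat N N" using unitary_similar_mat_witD[OF Q sim] by blast
  have "diagonal_mat T"
    by (rule normal_upper_triangular_diagonal[OF T ut normal_mat_unitary_similar[OF Q sim N]])
  moreover have "Re (T $$ (i,i)) < 0" if "k \<le> i" "i < N" for i
    using nonpos ev[OF similar_upper_triangular_diag_eigenvalue[OF sim T ut, of i]] that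
    by (meson linorder_neqE_linordered_idom)
  ultimately show ?thesis using that Q sim T k pos by blast
qed

definition block_diag_mat :: "nat \<Rightarrow> complex mat \<Rightarrow> complex mat \<Rightarrow> complex mat" where
  "block_diag_mat n X Y = four_block_mat X (0\<^sub>m n n) (0\<^sub>m n n) Y"

definition block_antidiag_mat :: "nat \<Rightarrow> complex mat \<Rightarrow> complex mat \<Rightarrow> complex mat" where
  "block_antidiag_mat n X Y = four_block_mat (0\<^sub>m n n) X Y (0\<^sub>m n n)"

context
  fixes n :: nat and X Y :: "complex mat"
  assumes c: "X \<in> carrier_mat n n" "Y \<in> carrier_mat n n"
begin

lemma block_diag_mat_carrier: "block_diag_mat n X Y \<in> carrier_mat (2*n) (2*n)"
  using c unfolding block_diag_mat_def by (metis four_block_carrier_mat mult_2)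

lemma mat_adjoint_block_diag:
  "mat_adjoint (block_diag_mat n X Y) = block_diag_mat n (mat_adjoint X) (mat_adjoint Y)"
  unfolding block_diag_mat_def using c by (subst mat_adjoint_four_block[OF c(1) _ _ c(2)]) auto

lemma uminus_block_antidiag: "- block_antidiag_mat n X Y = block_antidiag_mat n (- X) (- Y)"
  unfolding block_antidiag_mat_def using c by (intro eq_matI) auto

end

context
  fixes n :: nat and X Y X' Y' :: "complex mat"
  assumes c: "X \<in> carrier_mat n n" "Y \<in> carrier_mat n n" "X' \<in> carrier_mat n n" "Y' \<in> carrier_mat n n"
begin

private lemma z: "(0\<^sub>m n n :: complex mat) \<in> carrier_mat n n" by simp

lemma block_diag_mat_mult:
  "block_diag_mat n X Y * block_diag_mat n X' Y' = block_diag_mat n (X * X') (Y * Y')"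
  unfolding block_diag_mat_def using c by (subst mult_four_block_mat[OF c(1) z z c(2) c(3) z z c(4)]) auto

lemma block_diag_antidiag_mult:
  "block_diag_mat n X Y * block_antidiag_mat n X' Y' = block_antidiag_mat n (X * X') (Y * Y')"
  unfolding block_diag_mat_def block_antidiag_mat_def using c
  by (subst mult_four_block_mat[OF c(1) z z c(2) z c(3) c(4) z]) auto

lemma block_antidiag_diag_mult:
  "block_antidiag_mat n X Y * block_diag_mat n X' Y' = block_antidiag_mat n (X * Y') (Y * X')"
  unfolding block_diag_mat_def block_antidiag_mat_def using c
  by (subst mult_four_block_mat[OF z c(1) c(2) z c(3) z z c(4)]) auto

lemma block_antidiag_mat_mult:
  "block_antidiag_mat n X Y * block_antidiag_mat n X' Y' = block_diag_mat n (X * Y') (Y * X')"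
  unfolding block_diag_mat_def block_antidiag_mat_def using c
  by (subst mult_four_block_mat[OF z c(1) c(2) z z c(3) c(4) z]) auto

lemma block_diag_mat_inject:
  "block_diag_mat n X Y = block_diag_mat n X' Y' \<longleftrightarrow> X = X' \<and> Y = Y'"
proof
  assume eq: "block_diag_mat n X Y = block_diag_mat n X' Y'"
  have "X $$ (i,j) = X' $$ (i,j)" "Y $$ (i,j) = Y' $$ (i,j)" if "i < n" "j < n" for i j
    using arg_cong[OF eq, of "\<lambda>M. M $$ (i,j)"] arg_cong[OF eq, of "\<lambda>M. M $$ (i+n,j+n)"] that c
    unfolding block_diag_mat_def by auto
  then show "X = X' \<and> Y = Y'" using c by (auto intro!: eq_matI)
qed simp

lemma block_antidiag_mat_inject:
  "block_antidiag_mat n X Y = block_antidiag_mat n X' Y' \<longleftrightarrow> X = X' \<and> Y = Y'"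
proof
  assume eq: "block_antidiag_mat n X Y = block_antidiag_mat n X' Y'"
  have "X $$ (i,j) = X' $$ (i,j)" "Y $$ (i,j) = Y' $$ (i,j)" if "i < n" "j < n" for i j
    using arg_cong[OF eq, of "\<lambda>M. M $$ (i,j+n)"] arg_cong[OF eq, of "\<lambda>M. M $$ (i+n,j)"] that c
    unfolding block_antidiag_mat_def by auto
  then show "X = X' \<and> Y = Y'" using c by (auto intro!: eq_matI)
qed simp

end

lemma block_antidiag_anticommute:
  assumes B: "B \<in> carrier_mat n n" and D1: "D1 \<in> carrier_mat n n" and D2: "D2 \<in> carrier_mat n n"
    and MT: "block_antidiag_mat n B (mat_adjoint B) * block_diag_mat n D1 D2 =
      - (mat_adjoint (block_diag_mat n D1 D2) * block_antidiag_mat n B (mat_adjoint B))"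
  shows "B * D2 = - (mat_adjoint D1 * B)"
proof -
  have "block_antidiag_mat n (B * D2) (mat_adjoint B * D1) =
      block_antidiag_mat n (- (mat_adjoint D1 * B)) (- (mat_adjoint D2 * mat_adjoint B))"
    using MT B D1 D2
    by (simp add: block_antidiag_diag_mult mat_adjoint_block_diag block_diag_antidiag_mult
        uminus_block_antidiag mult_carrier_mat[of _ n n _ n])
  then show ?thesis
    using B D1 D2 by (simp add: block_antidiag_mat_inject uminus_carrier_mat mult_carrier_mat[of _ n n _ n])
qed

lemma block_diag_mat_one: "block_diag_mat n (1\<^sub>m n) (1\<^sub>m n) = 1\<^sub>m (2*n)"
  unfolding block_diag_mat_def by (simp add: mult_2)

lemma unitary_block_diag_mat:
  "unitary_mat n X \<Longrightarrow> unitary_mat n Y \<Longrightarrow> unitary_mat (2*n) (block_diag_mat n X Y)"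
  unfolding block_diag_mat_def mult_2 by (rule unitary_mat_four_block_diag)

lemma diagonal_mat_block_diag:
  assumes T: "T \<in> carrier_mat (2*n) (2*n)" and dT: "diagonal_mat T"
  shows "\<exists>D1 D2. D1 \<in> carrier_mat n n \<and> D2 \<in> carrier_mat n n \<and> diagonal_mat D1 \<and>
    T = block_diag_mat n D1 D2"
proof (intro exI conjI)
  let ?D1 = "mat n n (\<lambda>(i,j). T $$ (i,j))" and ?D2 = "mat n n (\<lambda>(i,j). T $$ (i+n,j+n))"
  show "diagonal_mat ?D1" using dT T unfolding diagonal_mat_def by auto
  show "T = block_diag_mat n ?D1 ?D2"
    using dT T unfolding diagonal_mat_def block_diag_mat_def
    by (intro eq_matI) (auto simp: not_less)
qed auto

lemma dim_flip_mat [simp]: "dim_row (flip_mat m) = m" "dim_col (flip_mat m) = m"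
  by (simp_all add: flip_mat_def)

lemma flip_mat_carrier [simp]: "flip_mat m \<in> carrier_mat m m"
  by (simp add: carrier_matI)

lemma mat_adjoint_flip_mat: "mat_adjoint (flip_mat m) = flip_mat m"
  by (rule eq_matI) (auto simp: flip_mat_def)

lemma flip_mat_index:
  "i < m \<Longrightarrow> j < m \<Longrightarrow> flip_mat m $$ (i,j) = (if j = m - 1 - i then 1 else 0)"
  by (auto simp: flip_mat_def)

lemma flip_mat_mult_flip_mat: "flip_mat m * flip_mat m = 1\<^sub>m m"
proof (rule eq_matI)
  fix i j assume i: "i < dim_row (1\<^sub>m m)" and j: "j < dim_col (1\<^sub>m m)"
  have "(flip_mat m * flip_mat m) $$ (i,j) = (\<Sum>k\<in>{0..<m}. flip_mat m $$ (i,k) * flip_mat m $$ (k,j))"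
    using i j by (simp add: scalar_prod_def)
  also have "\<dots> = (\<Sum>k\<in>{0..<m}. if k = m - 1 - i then flip_mat m $$ (k,j) else 0)"
    using i by (intro sum.cong refl) (simp add: flip_mat_index[of i m])
  also have "\<dots> = 1\<^sub>m m $$ (i,j)" using i j by (auto simp: flip_mat_index)
  finally show "(flip_mat m * flip_mat m) $$ (i,j) = 1\<^sub>m m $$ (i,j)" .
qed auto

lemma unitary_flip_mat: "unitary_mat m (flip_mat m)"
  unfolding unitary_mat_def mat_adjoint_flip_mat by (simp add: flip_mat_mult_flip_mat)

lemma flip_mat_double: "flip_mat (2*n) = block_antidiag_mat n (flip_mat n) (flip_mat n)"
  unfolding block_antidiag_mat_def by (rule eq_matI) (auto simp: flip_mat_def)

lemma mult_diagonal_mat_index: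
  assumes D: "(D::'a::semiring_0 mat) \<in> carrier_mat N N" "diagonal_mat D"
    and X: "X \<in> carrier_mat m N" and "i < m" "j < N"
  shows "(X * D) $$ (i,j) = X $$ (i,j) * D $$ (j,j)"
proof -
  have "(X * D) $$ (i,j) = (\<Sum>l\<in>{0..<N}. X $$ (i,l) * D $$ (l,j))"
    using assms by (simp add: scalar_prod_def)
  also have "\<dots> = (\<Sum>l\<in>{0..<N}. if l = j then X $$ (i,l) * D $$ (l,j) else 0)"
    using assms by (intro sum.cong refl) (auto simp: diagonal_mat_def)
  finally show ?thesis using assms by simp
qed

lemma diagonal_mat_mult_index:
  assumes D: "(D::'a::semiring_0 mat) \<in> carrier_mat N N" "diagonal_mat D"
    and X: "X \<in> carrier_mat N m" and "i < N" "j < m"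
  shows "(D * X) $$ (i,j) = D $$ (i,i) * X $$ (i,j)"
proof -
  have "(D * X) $$ (i,j) = (\<Sum>l\<in>{0..<N}. D $$ (i,l) * X $$ (l,j))"
    using assms by (simp add: scalar_prod_def)
  also have "\<dots> = (\<Sum>l\<in>{0..<N}. if l = i then D $$ (i,l) * X $$ (l,j) else 0)"
    using assms by (intro sum.cong refl) (auto simp: diagonal_mat_def)
  finally show ?thesis using assms by simp
qed

lemma anticommute_diagonal_mat_index:
  assumes T: "(T::complex mat) \<in> carrier_mat N N" "diagonal_mat T" and M: "M \<in> carrier_mat N N"
    and MT: "M * T = - (mat_adjoint T * M)" and i: "i < N" and j: "j < N"
    and sign: "Re (T $$ (i,i)) + Re (T $$ (j,j)) \<noteq> 0"
  shows "M $$ (i,j) = 0"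
proof -
  have "diagonal_mat (mat_adjoint T)" using T by (auto simp: diagonal_mat_def)
  then have "M $$ (i,j) * T $$ (j,j) = - (cnj (T $$ (i,i)) * M $$ (i,j))"
    using arg_cong[OF MT, of "\<lambda>X. X $$ (i,j)"] i j T M
      mult_diagonal_mat_index[OF T M i j] diagonal_mat_mult_index[of "mat_adjoint T" N M N i j]
    by simp
  then have "M $$ (i,j) * (T $$ (j,j) + cnj (T $$ (i,i))) = 0" by (simp add: algebra_simps)
  moreover have "T $$ (j,j) + cnj (T $$ (i,i)) \<noteq> 0"
    using sign by (metis complex_cnj_add complex_cnj_zero cnj.sel(1) plus_complex.sel(1) add.commute
        zero_complex.sel(1))
  ultimately show ?thesis by simp
qed

section \<open>Unitary matrices with vanishing diagonal blocks\<close>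

lemma vanishing_diagonal_blocks_square:
  fixes p :: "nat \<Rightarrow> nat \<Rightarrow> real"
  assumes k: "k \<le> N"
    and rows: "\<And>i. i < N \<Longrightarrow> (\<Sum>j<N. p i j) = 1"
    and cols: "\<And>j. j < N \<Longrightarrow> (\<Sum>i<N. p i j) = 1"
    and zero: "\<And>i j. i < N \<Longrightarrow> j < N \<Longrightarrow> (i < k \<longleftrightarrow> j < k) \<Longrightarrow> p i j = 0"
  shows "k = N - k"
proof -
  have "real k = (\<Sum>i<k. \<Sum>j<N. p i j)" using rows k by simp
  also have "\<dots> = (\<Sum>i<k. \<Sum>j\<in>{k..<N}. p i j)"
    by (intro sum.cong refl sum.mono_neutral_right) (use zero k in auto)
  also have "\<dots> = (\<Sum>j\<in>{k..<N}. \<Sum>i<k. p i j)" by (rule sum.swap)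
  also have "\<dots> = (\<Sum>j\<in>{k..<N}. \<Sum>i<N. p i j)"
    by (intro sum.cong refl sum.mono_neutral_left) (use zero k in auto)
  also have "\<dots> = real (N - k)" using cols by simp
  finally show ?thesis by linarith
qed

lemma unitary_vanishing_diagonal_blocks_square:
  assumes M: "unitary_mat N M" and k: "k \<le> N"
    and zero: "\<And>i j. i < N \<Longrightarrow> j < N \<Longrightarrow> (i < k \<longleftrightarrow> j < k) \<Longrightarrow> M $$ (i,j) = 0"
  shows "k = N - k"
proof (rule vanishing_diagonal_blocks_square[OF k, where p = "\<lambda>i j. (cmod (M $$ (i,j)))\<^sup>2"])
  have Mc: "M \<in> carrier_mat N N" using M by (rule unitary_mat_carrier)
  show "(\<Sum>j<N. (cmod (M $$ (i,j)))\<^sup>2) = 1" if "i < N" for i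
  proof -
    have "(M * mat_adjoint M) $$ (i,i) = 1" using M that by (simp add: unitary_mat_def)
    then show ?thesis using mult_mat_adjoint_diag[OF Mc that] by (metis of_real_eq_1_iff)
  qed
  show "(\<Sum>i<N. (cmod (M $$ (i,j)))\<^sup>2) = 1" if "j < N" for j
  proof -
    have "(mat_adjoint M * M) $$ (j,j) = 1" using M that by (simp add: unitary_mat_def)
    then show ?thesis using mat_adjoint_mult_diag[OF Mc that] by (metis of_real_eq_1_iff)
  qed
qed (use zero in auto)

lemma unitary_hermitian_block_antidiag:
  assumes M: "unitary_mat (2*n) M" and herm: "mat_adjoint M = M"
    and zero: "\<And>i j. i < 2*n \<Longrightarrow> j < 2*n \<Longrightarrow> (i < n \<longleftrightarrow> j < n) \<Longrightarrow> M $$ (i,j) = 0"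
  shows "\<exists>B. unitary_mat n B \<and> M = block_antidiag_mat n B (mat_adjoint B)"
proof -
  define B where "B = mat n n (\<lambda>(i,j). M $$ (i, j + n))"
  have Mc: "M \<in> carrier_mat (2*n) (2*n)" using M by (rule unitary_mat_carrier)
  have B: "B \<in> carrier_mat n n" "mat_adjoint B \<in> carrier_mat n n" unfolding B_def by auto
  have MB: "M = block_antidiag_mat n B (mat_adjoint B)"
  proof (rule eq_matI)
    fix i j assume "i < dim_row (block_antidiag_mat n B (mat_adjoint B))"
      "j < dim_col (block_antidiag_mat n B (mat_adjoint B))"
    then have ij: "i < 2*n" "j < 2*n" unfolding block_antidiag_mat_def by auto
    have "M $$ (i,j) = cnj (M $$ (j,i))"
      using arg_cong[OF herm, of "\<lambda>X. X $$ (i,j)"] ij Mc by simp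
    then show "M $$ (i,j) = block_antidiag_mat n B (mat_adjoint B) $$ (i,j)"
      using ij zero[OF ij] unfolding block_antidiag_mat_def B_def by (auto simp: not_less)
  qed (use Mc in \<open>auto simp: block_antidiag_mat_def\<close>)
  have "block_diag_mat n (B * mat_adjoint B) (mat_adjoint B * B) = block_diag_mat n (1\<^sub>m n) (1\<^sub>m n)"
    using M herm unfolding unitary_mat_def block_diag_mat_one
    by (metis MB block_antidiag_mat_mult[OF B B])
  then have "B * mat_adjoint B = 1\<^sub>m n" "mat_adjoint B * B = 1\<^sub>m n"
    using block_diag_mat_inject B by auto
  then show ?thesis using MB B unfolding unitary_mat_def by blast
qed

section \<open>Perplectic block diagonalization\<close>

lemma perskew_hermitian_adjoint:
  assumes "perskew_hermitian n A"
  shows "mat_adjoint A * flip_mat (2*n) = - (flip_mat (2*n) * A)"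
proof -
  have "A \<in> carrier_mat (2*n) (2*n)" using assms unfolding perskew_hermitian_def by simp
  then have "mat_adjoint A * flip_mat (2*n) = mat_adjoint (flip_mat (2*n) * A)"
    by (simp add: mat_adjoint_mult[of _ "2*n" "2*n" A "2*n"] mat_adjoint_flip_mat)
  also have "\<dots> = - (flip_mat (2*n) * A)" using assms unfolding perskew_hermitian_def by simp
  finally show ?thesis .
qed

lemma perskew_unitary_similar:
  assumes Q: "unitary_mat N Q" and sim: "similar_mat_wit A T Q (mat_adjoint Q)"
    and F: "F \<in> carrier_mat N N" and skew: "mat_adjoint A * F = - (F * A)"
  shows "(mat_adjoint Q * F * Q) * T = - (mat_adjoint T * (mat_adjoint Q * F * Q))"
proof -
  note A = unitary_similar_mat_witD[OF Q sim]
  have Qc: "Q \<in> carrier_mat N N" using Q by (rule unitary_mat_carrier)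
  have adj_T: "mat_adjoint T = mat_adjoint Q * mat_adjoint A * Q"
    unfolding A(2) by (rule mat_adjoint_conj[OF Qc A(3)])
  note [simp] = assoc_mult_mat[of _ N N _ N _ N] mult_carrier_mat[of _ N N _ N]
    unitary_mat_cancel[OF Q, of _ N]
  have "mat_adjoint A * (F * Q) = (mat_adjoint A * F) * Q" using A(3) F Qc by simp
  also have "\<dots> = - (F * A) * Q" using skew by simp
  also have "\<dots> = - (F * (A * Q))" using A(3) F Qc by simp
  finally have AFQ: "mat_adjoint A * (F * Q) = - (F * (A * Q))" .
  have "mat_adjoint T * (mat_adjoint Q * F * Q) = mat_adjoint Q * (mat_adjoint A * (F * Q))"
    unfolding adj_T using A(3) Qc F by simp
  moreover have "(mat_adjoint Q * F * Q) * T = mat_adjoint Q * (F * (A * Q))"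
    unfolding A(2) using A(3) Qc F by simp
  ultimately show ?thesis using AFQ A(3) Qc F by simp
qed

lemma unitary_adjoint_mult_flip_mat:
  assumes B: "unitary_mat n B"
  shows "unitary_mat n (mat_adjoint B * flip_mat n)"
    "mat_adjoint (mat_adjoint B * flip_mat n) = flip_mat n * B"
  using unitary_mat_mult[OF unitary_mat_adjoint[OF B] unitary_flip_mat] unitary_mat_carrier[OF B]
  by (auto simp: mat_adjoint_mult[of _ n n _ n] mat_adjoint_flip_mat)

lemma perplectic_mult_block_diag:
  assumes Q: "unitary_mat (2*n) Q" and B: "unitary_mat n B"
    and QFQ: "mat_adjoint Q * flip_mat (2*n) * Q = block_antidiag_mat n B (mat_adjoint B)"
  shows "perplectic n (Q * block_diag_mat n (1\<^sub>m n) (mat_adjoint B * flip_mat n))"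
proof -
  define F where "F = flip_mat n"
  define V where "V = block_diag_mat n (1\<^sub>m n) (mat_adjoint B * F)"
  have Bc: "B \<in> carrier_mat n n" using B by (rule unitary_mat_carrier)
  have Fc: "F \<in> carrier_mat n n" unfolding F_def by simp
  have one: "(1\<^sub>m n :: complex mat) \<in> carrier_mat n n" by simp
  have W: "mat_adjoint B * F \<in> carrier_mat n n" using mat_adjoint_carrier[OF Bc] Fc by (rule mult_carrier_mat)
  have Qc: "Q \<in> carrier_mat (2*n) (2*n)" using Q by (rule unitary_mat_carrier)
  have Vc: "V \<in> carrier_mat (2*n) (2*n)" unfolding V_def by (rule block_diag_mat_carrier[OF one W])
  have adj_V: "mat_adjoint V = block_diag_mat n (1\<^sub>m n) (F * B)"
    unfolding V_def mat_adjoint_block_diag[OF one W]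
    using unitary_adjoint_mult_flip_mat(2)[OF B] unfolding F_def by simp
  note [simp] = assoc_mult_mat[of _ n n _ n _ n] mult_carrier_mat[of _ n n _ n]
    unitary_mat_cancel[OF B, of _ n] carrier_matD[OF Bc] carrier_matD[OF Fc]
  have "block_antidiag_mat n B (mat_adjoint B) * V = block_antidiag_mat n F (mat_adjoint B)"
    unfolding V_def block_antidiag_diag_mult[OF Bc mat_adjoint_carrier[OF Bc] one W]
    using Fc by simp
  then have VMV: "mat_adjoint V * (block_antidiag_mat n B (mat_adjoint B) * V) = block_antidiag_mat n F F"
    unfolding adj_V using B Fc
    by (simp add: unitary_mat_def
        block_diag_antidiag_mult[OF one mult_carrier_mat[OF Fc Bc] Fc mat_adjoint_carrier[OF Bc]])
  have "mat_adjoint (Q * V) * flip_mat (2*n) * (Q * V) =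
      mat_adjoint V * ((mat_adjoint Q * flip_mat (2*n) * Q) * V)"
    using Qc Vc by (simp add: mat_adjoint_mult[OF Qc Vc] assoc_mult_mat[of _ "2*n" "2*n" _ "2*n" _ "2*n"]
        mult_carrier_mat[of _ "2*n" "2*n" _ "2*n"])
  also have "\<dots> = flip_mat (2*n)"
    unfolding QFQ VMV F_def by (rule flip_mat_double[symmetric])
  finally show ?thesis using Qc Vc unfolding perplectic_def V_def F_def by simp
qed

lemma block_diag_flip_conj:
  assumes B: "unitary_mat n B" and D1: "D1 \<in> carrier_mat n n" and D2: "D2 \<in> carrier_mat n n"
    and anticomm: "B * D2 = - (mat_adjoint D1 * B)"
  shows "block_diag_mat n (1\<^sub>m n) (mat_adjoint B * flip_mat n) *
      block_diag_mat n D1 (- (flip_mat n * mat_adjoint D1 * flip_mat n)) *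
      mat_adjoint (block_diag_mat n (1\<^sub>m n) (mat_adjoint B * flip_mat n)) = block_diag_mat n D1 D2"
proof -
  define F where "F = flip_mat n"
  define W where "W = mat_adjoint B * F"
  define E where "E = - (F * mat_adjoint D1 * F)"
  have Bc: "B \<in> carrier_mat n n" using B by (rule unitary_mat_carrier)
  have Fc: "F \<in> carrier_mat n n" and F: "mat_adjoint F = F" "unitary_mat n F"
    unfolding F_def by (auto simp: mat_adjoint_flip_mat unitary_flip_mat)
  have W: "W \<in> carrier_mat n n" "mat_adjoint W = F * B"
    unfolding W_def F_def using Bc unitary_adjoint_mult_flip_mat(2)[OF B] by auto
  have Ec: "E \<in> carrier_mat n n" unfolding E_def using Fc D1 by auto
  have one: "(1\<^sub>m n :: complex mat) \<in> carrier_mat n n" by simp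
  have cancel_F: "F * (F * X) = X" if "X \<in> carrier_mat n n" for X
    using unitary_mat_cancel(1)[OF F(2) that] F(1) by simp
  note [simp] = assoc_mult_mat[of _ n n _ n _ n] mult_carrier_mat[of _ n n _ n]
    unitary_mat_cancel[OF B, of _ n] cancel_F mat_adjoint_carrier[OF Bc] mat_adjoint_carrier[OF D1]
    carrier_matD[OF Bc] carrier_matD[OF Fc] carrier_matD[OF D1] carrier_matD[OF D2]
  have "W * E * mat_adjoint W = - (mat_adjoint B * (mat_adjoint D1 * B))"
    unfolding W(2) unfolding W_def E_def using Bc Fc D1 F(1) by simp
  also have "\<dots> = D2" using unitary_mat_cancel(2)[OF B D2] anticomm by simp
  finally have "block_diag_mat n (1\<^sub>m n) W * block_diag_mat n D1 E * mat_adjoint (block_diag_mat n (1\<^sub>m n) W)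
      = block_diag_mat n D1 D2"
    unfolding mat_adjoint_block_diag[OF one W(1)] using D1 Ec W Fc Bc
    by (simp add: block_diag_mat_mult)
  then show ?thesis unfolding W_def E_def F_def .
qed

text \<open>The witness is \<open>U = Q \<cdot> diag(I, B\<^sup>H F\<^sub>n)\<close>: conjugation by \<open>B\<^sup>H F\<^sub>n\<close> turns
  \<open>D\<^sub>2 = - B\<^sup>H D\<^sub>1\<^sup>H B\<close> into \<open>- F\<^sub>n D\<^sub>1\<^sup>H F\<^sub>n\<close>.\<close>
lemma perplectic_block_diagonalization:
  assumes Q: "unitary_mat (2*n) Q" and B: "unitary_mat n B"
    and D1: "D1 \<in> carrier_mat n n" and D2: "D2 \<in> carrier_mat n n"
    and QFQ: "mat_adjoint Q * flip_mat (2*n) * Q = block_antidiag_mat n B (mat_adjoint B)"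
    and anticomm: "B * D2 = - (mat_adjoint D1 * B)"
  shows "\<exists>U. unitary_mat (2*n) U \<and> perplectic n U \<and>
    Q * block_diag_mat n D1 D2 * mat_adjoint Q =
    U * block_diag_mat n D1 (- (flip_mat n * mat_adjoint D1 * flip_mat n)) * mat_adjoint U"
proof -
  define V where "V = block_diag_mat n (1\<^sub>m n) (mat_adjoint B * flip_mat n)"
  define E where "E = - (flip_mat n * mat_adjoint D1 * flip_mat n)"
  have V: "unitary_mat (2*n) V" unfolding V_def
    by (rule unitary_block_diag_mat[OF _ unitary_adjoint_mult_flip_mat(1)[OF B]])
      (simp add: unitary_mat_def)
  have E: "E \<in> carrier_mat n n"
    unfolding E_def using D1 by (meson flip_mat_carrier mat_adjoint_carrier mult_carrier_mat uminus_carrier_mat)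
  have "Q * block_diag_mat n D1 D2 * mat_adjoint Q = (Q * V) * block_diag_mat n D1 E * mat_adjoint (Q * V)"
    using mult_conj_mat_adjoint[OF unitary_mat_carrier[OF Q] unitary_mat_carrier[OF V]
        block_diag_mat_carrier[OF D1 E]] block_diag_flip_conj[OF B D1 D2 anticomm]
    unfolding V_def E_def by simp
  then show ?thesis
    using unitary_mat_mult[OF Q V] perplectic_mult_block_diag[OF Q B QFQ] unfolding V_def E_def by blast
qed

lemma perskew_unitary_similar_block_antidiag:
  assumes Q: "unitary_mat (2*n) Q" and sim: "similar_mat_wit A T Q (mat_adjoint Q)"
    and skew: "mat_adjoint A * flip_mat (2*n) = - (flip_mat (2*n) * A)"
    and T: "diagonal_mat T" and k: "k \<le> 2*n"
    and pos: "\<And>i. i < k \<Longrightarrow> Re (T $$ (i,i)) > 0"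
    and neg: "\<And>i. k \<le> i \<Longrightarrow> i < 2*n \<Longrightarrow> Re (T $$ (i,i)) < 0"
  shows "\<exists>B. unitary_mat n B \<and> mat_adjoint Q * flip_mat (2*n) * Q = block_antidiag_mat n B (mat_adjoint B)"
proof -
  define M where "M = mat_adjoint Q * flip_mat (2*n) * Q"
  have Tc: "T \<in> carrier_mat (2*n) (2*n)" using unitary_similar_mat_witD[OF Q sim] by blast
  have M: "unitary_mat (2*n) M" "mat_adjoint M = M"
    unfolding M_def using unitary_mat_mult[OF unitary_mat_mult[OF unitary_mat_adjoint[OF Q] unitary_flip_mat] Q]
      mat_adjoint_conj[OF unitary_mat_carrier[OF Q] flip_mat_carrier] mat_adjoint_flip_mat by simp_all
  have MT: "M * T = - (mat_adjoint T * M)"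
    unfolding M_def by (rule perskew_unitary_similar[OF Q sim flip_mat_carrier skew])
  have zero: "M $$ (i,j) = 0" if "i < 2*n" "j < 2*n" "i < k \<longleftrightarrow> j < k" for i j
  proof (rule anticommute_diagonal_mat_index[OF Tc T unitary_mat_carrier[OF M(1)] MT that(1,2)])
    show "Re (T $$ (i,i)) + Re (T $$ (j,j)) \<noteq> 0"
    proof (cases "i < k")
      case True
      then show ?thesis using pos[of i] pos[of j] that(3) by simp
    next
      case False
      then show ?thesis using neg[of i] neg[of j] that by simp
    qed
  qed
  have "k = n" using unitary_vanishing_diagonal_blocks_square[OF M(1) k zero] by arith
  then show ?thesis
    using unitary_hermitian_block_antidiag[OF M] zero unfolding M_def by blast
qed

theorem lemma2p6:
  fixes n :: nat and A :: "complex mat"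
  assumes "A \<in> carrier_mat (2*n) (2*n)"
    and "normal_mat A"
    and "perskew_hermitian n A"
    and "\<And>ev. eigenvalue A ev \<Longrightarrow> Re ev \<noteq> 0"
  shows "\<exists>U D. unitary_mat (2*n) U \<and> perplectic n U \<and>
           D \<in> carrier_mat n n \<and> diagonal_mat D \<and>
           A = U * four_block_mat D (0\<^sub>m n n) (0\<^sub>m n n)
                   (- (flip_mat n * mat_adjoint D * flip_mat n)) * mat_adjoint U"
proof -
  obtain Q T k where Q: "unitary_mat (2*n) Q" and sim: "similar_mat_wit A T Q (mat_adjoint Q)"
    and T: "T \<in> carrier_mat (2*n) (2*n)" "diagonal_mat T" and k: "k \<le> 2*n"
    and pos: "\<And>i. i < k \<Longrightarrow> Re (T $$ (i,i)) > 0"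
    and neg: "\<And>i. k \<le> i \<Longrightarrow> i < 2*n \<Longrightarrow> Re (T $$ (i,i)) < 0"
    using normal_ordered_diagonalization[OF assms(1,2,4)] by blast
  have skew: "mat_adjoint A * flip_mat (2*n) = - (flip_mat (2*n) * A)"
    using assms(3) by (rule perskew_hermitian_adjoint)
  obtain B where B: "unitary_mat n B"
    and QFQ: "mat_adjoint Q * flip_mat (2*n) * Q = block_antidiag_mat n B (mat_adjoint B)"
    using perskew_unitary_similar_block_antidiag[OF Q sim skew T(2) k pos neg] by blast
  obtain D1 D2 where D: "D1 \<in> carrier_mat n n" "D2 \<in> carrier_mat n n" "diagonal_mat D1"
    and TD: "T = block_diag_mat n D1 D2"
    using diagonal_mat_block_diag[OF T] by blast
  have "block_antidiag_mat n B (mat_adjoint B) * T = - (mat_adjoint T * block_antidiag_mat n B (mat_adjoint B))"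
    using perskew_unitary_similar[OF Q sim flip_mat_carrier skew] unfolding QFQ .
  then have BD: "B * D2 = - (mat_adjoint D1 * B)"
    unfolding TD by (rule block_antidiag_anticommute[OF unitary_mat_carrier[OF B] D(1,2)])
  from perplectic_block_diagonalization[OF Q B D(1,2) QFQ BD]
  obtain U where U: "unitary_mat (2*n) U" "perplectic n U"
    and QU: "Q * block_diag_mat n D1 D2 * mat_adjoint Q =
      U * block_diag_mat n D1 (- (flip_mat n * mat_adjoint D1 * flip_mat n)) * mat_adjoint U"
    by blast
  have "A = U * block_diag_mat n D1 (- (flip_mat n * mat_adjoint D1 * flip_mat n)) * mat_adjoint U"
    using unitary_similar_mat_witD(1)[OF Q sim] unfolding TD QU .
  then show ?thesis using U D unfolding block_diag_mat_def by blast
qed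

end
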